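(* A subset $\mathcal R$ of $\mathcal G$ is a $Z$-regulus if and only if the following three conditions hold: (D1) the elements of $\mathcal R$ are mutually distant and $|\mathcal R|\ge 3$; (D2) whenever $E_0,E_1,E_2\in\mathcal R$ are mutually distinct and $W\in\mathcal G$ is adjacent to $E_0$ and not distant from $E_1$ and not distant from $E_2$, then $W$ is not distant from any $E\in\mathcal R$; (D3) $\mathcal R$ is not properly contained in any subset of $\mathcal G$ satisfying (D1) and (D2).
   Context: $K$ is a (not necessarily commutative) field with centre $Z$, and $V$ is a left vector space over $K$ of arbitrary (possibly infinite) dimension with $\dim V>2$. $\mathcal G:=\{X\le V\mid X\cong V/X\}$, assumed nonempty. Points are $1$-dimensional and lines $2$-dimensional subspaces; two subspaces meet if they have a common point. $X,Y\in\mathcal G$ are adjacent if $\dim((X+Y)/X)=\dim((X+Y)/Y)=1$, and distant if $V=X\oplus Y$. A $Z$-regulus is a subset $\mathcal R\subseteq\mathcal G$ such that (R1) its elements are mutually distant and $|\mathcal R|\ge3$; (R2) if a line meets three mutually distinct elements of $\mathcal R$ then it meets all elements of $\mathcal R$; (R3) $\mathcal R$ is not properly contained in any subset of $\mathcal G$ satisfying (R1) and (R2). *)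

theory Defs
  imports Main
begin

text \<open>A left vector space V (the whole type 'v) over a (not necessarily commutative)
  field K, i.e. a division ring 'k.\<close>

definition left_vector_space :: "('k::division_ring \<Rightarrow> 'v::ab_group_add \<Rightarrow> 'v) \<Rightarrow> bool" where
  "left_vector_space scale \<longleftrightarrow>
     (\<forall>a x y. scale a (x + y) = scale a x + scale a y) \<and>
     (\<forall>a b x. scale (a + b) x = scale a x + scale b x) \<and>
     (\<forall>a b x. scale a (scale b x) = scale (a * b) x) \<and>
     (\<forall>x. scale 1 x = x)"

definition subspace :: "('k::division_ring \<Rightarrow> 'v::ab_group_add \<Rightarrow> 'v) \<Rightarrow> 'v set \<Rightarrow> bool" where
  "subspace scale X \<longleftrightarrow> 0 \<in> X \<and> (\<forall>x\<in>X. \<forall>y\<in>X. x + y \<in> X) \<and> (\<forall>a. \<forall>x\<in>X. scale a x \<in> X)"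

definition dim_gt_2 :: "('k::division_ring \<Rightarrow> 'v::ab_group_add \<Rightarrow> 'v) \<Rightarrow> bool" where
  "dim_gt_2 scale \<longleftrightarrow> (\<exists>u v w. \<forall>a b c. scale a u + scale b v + scale c w = 0 \<longrightarrow> a = 0 \<and> b = 0 \<and> c = 0)"

definition ssum :: "'v::ab_group_add set \<Rightarrow> 'v set \<Rightarrow> 'v set" where
  "ssum X Y = {x + y | x y. x \<in> X \<and> y \<in> Y}"

definition span1 :: "('k::division_ring \<Rightarrow> 'v::ab_group_add \<Rightarrow> 'v) \<Rightarrow> 'v \<Rightarrow> 'v set" where
  "span1 scale v = range (\<lambda>a. scale a v)"

text \<open>Quotient space V/X: cosets with the induced operations.\<close>
definition cosets :: "'v::ab_group_add set \<Rightarrow> 'v set set" where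
  "cosets X = {(\<lambda>x. v + x) ` X | v. True}"

definition qadd :: "'v::ab_group_add set \<Rightarrow> 'v set \<Rightarrow> 'v set" where
  "qadd C D = {c + d | c d. c \<in> C \<and> d \<in> D}"

definition qscale :: "('k::division_ring \<Rightarrow> 'v::ab_group_add \<Rightarrow> 'v) \<Rightarrow> 'v set \<Rightarrow> 'k \<Rightarrow> 'v set \<Rightarrow> 'v set" where
  "qscale scale X a C = {scale a c + x | c x. c \<in> C \<and> x \<in> X}"

definition iso_quot :: "('k::division_ring \<Rightarrow> 'v::ab_group_add \<Rightarrow> 'v) \<Rightarrow> 'v set \<Rightarrow> bool" where
  "iso_quot scale X \<longleftrightarrow> (\<exists>g. bij_betw g X (cosets X) \<and>
      (\<forall>x\<in>X. \<forall>y\<in>X. g (x + y) = qadd (g x) (g y)) \<and>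
      (\<forall>a. \<forall>x\<in>X. g (scale a x) = qscale scale X a (g x)))"

definition Gr :: "('k::division_ring \<Rightarrow> 'v::ab_group_add \<Rightarrow> 'v) \<Rightarrow> 'v set set" where
  "Gr scale = {X. subspace scale X \<and> iso_quot scale X}"

definition is_point :: "('k::division_ring \<Rightarrow> 'v::ab_group_add \<Rightarrow> 'v) \<Rightarrow> 'v set \<Rightarrow> bool" where
  "is_point scale P \<longleftrightarrow> (\<exists>v. v \<noteq> 0 \<and> P = span1 scale v)"

definition is_line :: "('k::division_ring \<Rightarrow> 'v::ab_group_add \<Rightarrow> 'v) \<Rightarrow> 'v set \<Rightarrow> bool" where
  "is_line scale L \<longleftrightarrow> (\<exists>u v. (\<forall>a b. scale a u + scale b v = 0 \<longrightarrow> a = 0 \<and> b = 0) \<and>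
      L = {scale a u + scale b v | a b. True})"

definition meets :: "('k::division_ring \<Rightarrow> 'v::ab_group_add \<Rightarrow> 'v) \<Rightarrow> 'v set \<Rightarrow> 'v set \<Rightarrow> bool" where
  "meets scale X Y \<longleftrightarrow> (\<exists>P. is_point scale P \<and> P \<subseteq> X \<and> P \<subseteq> Y)"

text \<open>dim((X+Y)/X) = 1\<close>
definition quot_dim1 :: "('k::division_ring \<Rightarrow> 'v::ab_group_add \<Rightarrow> 'v) \<Rightarrow> 'v set \<Rightarrow> 'v set \<Rightarrow> bool" where
  "quot_dim1 scale X Y \<longleftrightarrow> (\<exists>v. v \<notin> X \<and> ssum X Y = ssum X (span1 scale v))"

definition adjacent :: "('k::division_ring \<Rightarrow> 'v::ab_group_add \<Rightarrow> 'v) \<Rightarrow> 'v set \<Rightarrow> 'v set \<Rightarrow> bool" where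
  "adjacent scale X Y \<longleftrightarrow> quot_dim1 scale X Y \<and> quot_dim1 scale Y X"

definition distant :: "'v::ab_group_add set \<Rightarrow> 'v set \<Rightarrow> bool" where
  "distant X Y \<longleftrightarrow> ssum X Y = UNIV \<and> X \<inter> Y = {0}"

definition at_least_3 :: "'a set \<Rightarrow> bool" where
  "at_least_3 R \<longleftrightarrow> (\<exists>a\<in>R. \<exists>b\<in>R. \<exists>c\<in>R. a \<noteq> b \<and> a \<noteq> c \<and> b \<noteq> c)"

definition R1 :: "'v::ab_group_add set set \<Rightarrow> bool" where
  "R1 R \<longleftrightarrow> (\<forall>X\<in>R. \<forall>Y\<in>R. X \<noteq> Y \<longrightarrow> distant X Y) \<and> at_least_3 R"

definition R2 :: "('k::division_ring \<Rightarrow> 'v::ab_group_add \<Rightarrow> 'v) \<Rightarrow> 'v set set \<Rightarrow> bool" where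
  "R2 scale R \<longleftrightarrow> (\<forall>L. is_line scale L \<longrightarrow>
     (\<forall>E0\<in>R. \<forall>E1\<in>R. \<forall>E2\<in>R. E0 \<noteq> E1 \<and> E0 \<noteq> E2 \<and> E1 \<noteq> E2 \<and>
        meets scale L E0 \<and> meets scale L E1 \<and> meets scale L E2 \<longrightarrow> (\<forall>E\<in>R. meets scale L E)))"

definition Z_regulus :: "('k::division_ring \<Rightarrow> 'v::ab_group_add \<Rightarrow> 'v) \<Rightarrow> 'v set set \<Rightarrow> bool" where
  "Z_regulus scale R \<longleftrightarrow> R \<subseteq> Gr scale \<and> R1 R \<and> R2 scale R \<and>
     \<not> (\<exists>S. R \<subset> S \<and> S \<subseteq> Gr scale \<and> R1 S \<and> R2 scale S)"

definition D1 :: "'v::ab_group_add set set \<Rightarrow> bool" where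
  "D1 R \<longleftrightarrow> R1 R"

definition D2 :: "('k::division_ring \<Rightarrow> 'v::ab_group_add \<Rightarrow> 'v) \<Rightarrow> 'v set set \<Rightarrow> bool" where
  "D2 scale R \<longleftrightarrow> (\<forall>E0\<in>R. \<forall>E1\<in>R. \<forall>E2\<in>R. E0 \<noteq> E1 \<and> E0 \<noteq> E2 \<and> E1 \<noteq> E2 \<longrightarrow>
     (\<forall>W\<in>Gr scale. adjacent scale W E0 \<and> \<not> distant W E1 \<and> \<not> distant W E2 \<longrightarrow>
        (\<forall>E\<in>R. \<not> distant W E)))"

definition D3 :: "('k::division_ring \<Rightarrow> 'v::ab_group_add \<Rightarrow> 'v) \<Rightarrow> 'v set set \<Rightarrow> bool" where
  "D3 scale R \<longleftrightarrow> \<not> (\<exists>S. R \<subset> S \<and> S \<subseteq> Gr scale \<and> D1 S \<and> D2 scale S)"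

end

theory Submission
  imports Defs
begin

text \<open>For a family \<open>\<R> \<subseteq> \<G>\<close> of mutually distant elements, (R2) and (D2) are equivalent; since (D1)
  is (R1), the maximality conditions (R3) and (D3) then coincide as well.

  (R2) \<open>\<Rightarrow>\<close> (D2): if \<open>W\<close> is adjacent to \<open>E0\<close> but not distant from \<open>E1\<close>, \<open>E2\<close>, then \<open>W\<close> meets
  \<open>E1\<close> and \<open>E2\<close>, say in \<open>b\<close> and \<open>c\<close>; as \<open>W \<inter> E0\<close> is a hyperplane of \<open>W\<close>, the line through \<open>b\<close>
  and \<open>c\<close> meets \<open>E0\<close> too, so by (R2) it meets every \<open>E\<close>, whence \<open>W\<close> is not distant from \<open>E\<close>.
  (\<open>W\<close> is never distant from \<open>E0\<close> itself, as \<open>dim V > 2\<close>.)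

  (D2) \<open>\<Rightarrow>\<close> (R2): suppose a line meets \<open>E0, E1, E2\<close> in \<open>a0, a1, a2\<close> but misses \<open>E\<close>. Write
  \<open>a1 = z + e\<close> with \<open>z \<in> E0\<close>, \<open>e \<in> E\<close> and choose (Zorn) a hyperplane \<open>H\<close> of \<open>E0\<close> through \<open>a0\<close>
  avoiding \<open>z\<close>. Then \<open>W = H \<oplus> Ka1\<close> is the image of \<open>E0 = H \<oplus> Kz\<close> under a transvection, so
  \<open>W \<in> \<G>\<close>; it is adjacent to \<open>E0\<close>, contains the line, hence meets \<open>E1\<close> and \<open>E2\<close>, and (D2) says
  it is not distant from \<open>E\<close>. But \<open>W \<inter> E = 0\<close>, and for a subspace adjacent to \<open>E0\<close> and disjoint
  from \<open>E\<close> this already forces \<open>W \<oplus> E = V\<close>.\<close>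

locale left_vs =
  fixes scale :: "'k::division_ring \<Rightarrow> 'v::ab_group_add \<Rightarrow> 'v"
  assumes left_vector_space: "left_vector_space scale"
begin

lemma scale_right_distrib: "scale a (x + y) = scale a x + scale a y"
  using left_vector_space unfolding left_vector_space_def by blast

lemma scale_left_distrib: "scale (a + b) x = scale a x + scale b x"
  using left_vector_space unfolding left_vector_space_def by blast

lemma scale_scale [simp]: "scale a (scale b x) = scale (a * b) x"
  using left_vector_space unfolding left_vector_space_def by blast

lemma scale_one [simp]: "scale 1 x = x"
  using left_vector_space unfolding left_vector_space_def by blast

lemma scale_zero_left [simp]: "scale 0 x = 0"
  using scale_left_distrib[of 0 0 x] by simp

lemma scale_zero_right [simp]: "scale a 0 = 0"
  using scale_right_distrib[of a 0 0] by simp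

lemma scale_minus_left: "scale (- a) x = - scale a x"
  using scale_left_distrib[of a "- a" x] by (simp add: eq_neg_iff_add_eq_0 add.commute)

lemma scale_minus_right: "scale a (- x) = - scale a x"
  using scale_right_distrib[of a x "- x"] by (simp add: eq_neg_iff_add_eq_0 add.commute)

lemma scale_right_diff_distrib: "scale a (x - y) = scale a x - scale a y"
  by (simp only: diff_conv_add_uminus scale_right_distrib scale_minus_right)

lemma scale_left_diff_distrib: "scale (a - b) x = scale a x - scale b x"
  by (simp only: diff_conv_add_uminus scale_left_distrib scale_minus_left)

lemma scale_eq_0_iff [simp]: "scale a x = 0 \<longleftrightarrow> a = 0 \<or> x = 0"
proof
  assume "scale a x = 0"
  then show "a = 0 \<or> x = 0"
    by (metis scale_one scale_scale scale_zero_right left_inverse)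
qed auto

lemmas scale_simps = scale_right_distrib scale_left_distrib scale_minus_left scale_minus_right
  scale_right_diff_distrib scale_left_diff_distrib

lemma subspace_0: "subspace scale X \<Longrightarrow> 0 \<in> X"
  unfolding subspace_def by blast

lemma subspace_add: "subspace scale X \<Longrightarrow> x \<in> X \<Longrightarrow> y \<in> X \<Longrightarrow> x + y \<in> X"
  unfolding subspace_def by blast

lemma subspace_scale: "subspace scale X \<Longrightarrow> x \<in> X \<Longrightarrow> scale a x \<in> X"
  unfolding subspace_def by blast

lemma subspace_neg: "subspace scale X \<Longrightarrow> x \<in> X \<Longrightarrow> - x \<in> X"
  using subspace_scale[of X x "- 1"] by (simp add: scale_minus_left)

lemma subspace_diff: "subspace scale X \<Longrightarrow> x \<in> X \<Longrightarrow> y \<in> X \<Longrightarrow> x - y \<in> X"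
  unfolding diff_conv_add_uminus by (intro subspace_add subspace_neg)

lemma subspace_Int: "subspace scale X \<Longrightarrow> subspace scale Y \<Longrightarrow> subspace scale (X \<inter> Y)"
  unfolding subspace_def by blast

lemma scale_mem_subspace_iff:
  assumes "subspace scale X" "a \<notin> X"
  shows "scale \<beta> a \<in> X \<longleftrightarrow> \<beta> = 0"
proof
  assume "scale \<beta> a \<in> X"
  then have "scale (inverse \<beta>) (scale \<beta> a) \<in> X" by (rule subspace_scale[OF assms(1)])
  then show "\<beta> = 0" using assms(2) by (cases "\<beta> = 0") simp_all
qed (simp add: subspace_0[OF assms(1)])

lemma independent_of_mem_not_mem:
  assumes X: "subspace scale X" and x: "x \<in> X" "x \<noteq> 0" and y: "y \<notin> X"
    and eq: "scale a x + scale b y = 0"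
  shows "a = 0 \<and> b = 0"
proof -
  have "scale b y = scale (- a) x" using eq by (simp add: scale_minus_left eq_neg_iff_add_eq_0 add.commute)
  then have "scale b y \<in> X" using subspace_scale[OF X x(1)] by simp
  then have "b = 0" using scale_mem_subspace_iff[OF X y] by blast
  then show ?thesis using eq x by simp
qed

lemma subspace_ssum:
  assumes X: "subspace scale X" and Y: "subspace scale Y"
  shows "subspace scale (ssum X Y)"
  unfolding subspace_def ssum_def
proof (intro conjI ballI allI)
  show "0 \<in> {x + y |x y. x \<in> X \<and> y \<in> Y}"
    using subspace_0[OF X] subspace_0[OF Y] by force
next
  fix p q assume "p \<in> {x + y |x y. x \<in> X \<and> y \<in> Y}" "q \<in> {x + y |x y. x \<in> X \<and> y \<in> Y}"
  then obtain x1 y1 x2 y2 where "x1 \<in> X" "y1 \<in> Y" "x2 \<in> X" "y2 \<in> Y" "p = x1 + y1" "q = x2 + y2"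
    by blast
  moreover have "p + q = (x1 + x2) + (y1 + y2)" using calculation by (simp add: algebra_simps)
  ultimately show "p + q \<in> {x + y |x y. x \<in> X \<and> y \<in> Y}"
    using subspace_add[OF X] subspace_add[OF Y] by blast
next
  fix a p assume "p \<in> {x + y |x y. x \<in> X \<and> y \<in> Y}"
  then obtain x y where "x \<in> X" "y \<in> Y" "p = x + y" by blast
  then show "scale a p \<in> {x + y |x y. x \<in> X \<and> y \<in> Y}"
    using subspace_scale[OF X] subspace_scale[OF Y] by (force simp: scale_right_distrib)
qed

lemma subspace_span1: "subspace scale (span1 scale v)"
  unfolding subspace_def span1_def
  by (auto simp: scale_left_distrib[symmetric] intro: range_eqI[of _ _ 0] range_eqI)

lemma ssum_iff: "x \<in> ssum X Y \<longleftrightarrow> (\<exists>a\<in>X. \<exists>b\<in>Y. x = a + b)"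
  unfolding ssum_def by blast

lemma ssum_span1_iff: "x \<in> ssum X (span1 scale v) \<longleftrightarrow> (\<exists>h\<in>X. \<exists>b. x = h + scale b v)"
  unfolding ssum_iff span1_def by blast

lemma subset_ssum_left: "subspace scale Y \<Longrightarrow> X \<subseteq> ssum X Y"
  unfolding ssum_iff subset_iff by (metis add.right_neutral subspace_0)

lemma subset_ssum_right: "subspace scale X \<Longrightarrow> Y \<subseteq> ssum X Y"
  unfolding ssum_iff subset_iff by (metis add_0 subspace_0)

lemma mem_span1_self: "v \<in> span1 scale v"
  unfolding span1_def by (metis rangeI scale_one)

lemma span1_subset_iff: "subspace scale X \<Longrightarrow> span1 scale v \<subseteq> X \<longleftrightarrow> v \<in> X"
  using mem_span1_self by (auto simp: span1_def intro: subspace_scale)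

lemma line_eq_ssum: "{scale a u + scale b v |a b. True} = ssum (span1 scale u) (span1 scale v)"
  unfolding ssum_def span1_def by blast

lemma subspace_line: "subspace scale {scale a u + scale b v |a b. True}"
  unfolding line_eq_ssum by (intro subspace_ssum subspace_span1)

lemma meets_iff:
  assumes "subspace scale X" "subspace scale Y"
  shows "meets scale X Y \<longleftrightarrow> (\<exists>v. v \<noteq> 0 \<and> v \<in> X \<and> v \<in> Y)"
  unfolding meets_def is_point_def using span1_subset_iff[OF assms(1)] span1_subset_iff[OF assms(2)]
  by blast

lemma Int_eq_zero_iff:
  assumes "subspace scale X" "subspace scale Y"
  shows "X \<inter> Y = {0} \<longleftrightarrow> \<not> (\<exists>v. v \<noteq> 0 \<and> v \<in> X \<and> v \<in> Y)"
  using subspace_0[OF assms(1)] subspace_0[OF assms(2)] by blast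

definition hyperplane_compl :: "'v set \<Rightarrow> 'v set \<Rightarrow> 'v \<Rightarrow> bool" where
  "hyperplane_compl X P z \<longleftrightarrow>
     subspace scale P \<and> P \<subseteq> X \<and> z \<in> X \<and> z \<notin> P \<and> (\<forall>x\<in>X. \<exists>\<alpha>. x - scale \<alpha> z \<in> P)"

lemma subspace_Union_chain:
  assumes "C \<noteq> {}" "\<forall>X\<in>C. subspace scale X" "\<forall>X\<in>C. \<forall>Y\<in>C. X \<subseteq> Y \<or> Y \<subseteq> X"
  shows "subspace scale (\<Union>C)"
  unfolding subspace_def
proof (intro conjI ballI allI)
  show "0 \<in> \<Union>C" using assms(1,2) subspace_0 by blast
next
  fix x y assume "x \<in> \<Union>C" "y \<in> \<Union>C"
  then obtain X Y where "X \<in> C" "Y \<in> C" "x \<in> X" "y \<in> Y" by blast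
  moreover have "X \<subseteq> Y \<or> Y \<subseteq> X" using assms(3) calculation by blast
  ultimately show "x + y \<in> \<Union>C" using assms(2) by (blast intro: subspace_add)
next
  fix a x assume "x \<in> \<Union>C"
  then show "scale a x \<in> \<Union>C" using assms(2) by (blast intro: subspace_scale)
qed

lemma hyperplane_compl_exists:
  assumes A: "subspace scale A" and z: "z \<notin> A"
  obtains P where "A \<subseteq> P" "hyperplane_compl UNIV P z"
proof -
  define F where "F = {P. subspace scale P \<and> A \<subseteq> P \<and> z \<notin> P}"
  have "\<exists>M\<in>F. \<forall>X\<in>F. M \<subseteq> X \<longrightarrow> X = M"
  proof (rule subset_Zorn_nonempty)
    show "F \<noteq> {}" using A z unfolding F_def by blast
  next
    fix C assume ne: "C \<noteq> {}" and "subset.chain F C"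
    then have "C \<subseteq> F" "\<forall>X\<in>C. \<forall>Y\<in>C. X \<subseteq> Y \<or> Y \<subseteq> X" unfolding subset.chain_def by auto
    then show "\<Union>C \<in> F" using ne subspace_Union_chain[OF ne] unfolding F_def by auto
  qed
  then obtain M where MF: "M \<in> F" and max: "\<forall>X\<in>F. M \<subseteq> X \<longrightarrow> X = M" by blast
  have M: "subspace scale M" "A \<subseteq> M" "z \<notin> M" using MF unfolding F_def by auto
  \<comment> \<open>by maximality, adjoining any \<open>x \<notin> M\<close> to \<open>M\<close> captures \<open>z\<close>\<close>
  have "\<exists>\<alpha>. x - scale \<alpha> z \<in> M" for x
  proof (cases "x \<in> M")
    case True then show ?thesis by (metis diff_0_right scale_zero_left)
  next
    case False
    define M' where "M' = ssum M (span1 scale x)"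
    have "subspace scale M'" unfolding M'_def using M(1) by (intro subspace_ssum subspace_span1)
    moreover have "M \<subseteq> M'" "x \<in> M'"
      unfolding M'_def using subset_ssum_left[OF subspace_span1] subset_ssum_right[OF M(1)] mem_span1_self
      by blast+
    ultimately have "z \<in> M'" using max M False unfolding F_def by blast
    then obtain m b where zm: "m \<in> M" "z = m + scale b x" unfolding M'_def ssum_span1_iff by blast
    have "b \<noteq> 0" using zm M by auto
    then have "x - scale (inverse b) z = - scale (inverse b) m"
      by (simp add: zm scale_right_distrib)
    then show ?thesis using subspace_neg[OF M(1) subspace_scale[OF M(1) zm(1)]] by metis
  qed
  then show ?thesis using that M unfolding hyperplane_compl_def by blast
qed

lemma hyperplane_compl_Int:
  assumes "hyperplane_compl UNIV P z" "subspace scale X" "z \<in> X"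
  shows "hyperplane_compl X (P \<inter> X) z"
  using assms subspace_Int unfolding hyperplane_compl_def
  by (fastforce intro: subspace_diff subspace_scale)

lemma hyperplane_compl_coord_unique:
  assumes H: "hyperplane_compl X P z" and "x - scale \<alpha> z \<in> P" "x - scale \<beta> z \<in> P"
  shows "\<alpha> = \<beta>"
proof (rule ccontr)
  assume ne: "\<alpha> \<noteq> \<beta>"
  have P: "subspace scale P" using H unfolding hyperplane_compl_def by blast
  have "(x - scale \<beta> z) - (x - scale \<alpha> z) = scale (\<alpha> - \<beta>) z"
    by (simp add: scale_left_diff_distrib)
  then have "scale (\<alpha> - \<beta>) z \<in> P" using subspace_diff[OF P assms(3,2)] by simp
  then have "scale (inverse (\<alpha> - \<beta>)) (scale (\<alpha> - \<beta>) z) \<in> P" by (rule subspace_scale[OF P])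
  then show False using H ne unfolding hyperplane_compl_def by simp
qed

lemma two_in_span1_dependent:
  "\<exists>c1 c2. (c1 \<noteq> 0 \<or> c2 \<noteq> 0) \<and> scale c1 (scale q1 v) + scale c2 (scale q2 v) = 0"
proof (cases "q1 = 0")
  case True then show ?thesis by (rule_tac x=1 in exI, rule_tac x=0 in exI) simp
next
  case False
  then have "scale (- (q2 * inverse q1)) (scale q1 v) + scale 1 (scale q2 v) = 0"
    by (simp add: scale_minus_left mult.assoc)
  then show ?thesis by (metis one_neq_zero)
qed

lemma three_in_span2_dependent_pivot:
  assumes x1: "x1 = scale p1 u + scale q1 v" and x2: "x2 = scale p2 u + scale q2 v"
    and x3: "x3 = scale p3 u + scale q3 v" and p1: "p1 \<noteq> 0"
  shows "\<exists>c1 c2 c3. (c1 \<noteq> 0 \<or> c2 \<noteq> 0 \<or> c3 \<noteq> 0) \<and> scale c1 x1 + scale c2 x2 + scale c3 x3 = 0"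
proof -
  define k2 where "k2 = p2 * inverse p1"
  define k3 where "k3 = p3 * inverse p1"
  \<comment> \<open>eliminate \<open>u\<close> from \<open>x2\<close> and \<open>x3\<close> using \<open>x1\<close>\<close>
  have y2: "x2 - scale k2 x1 = scale (q2 - k2 * q1) v"
    using p1 by (simp add: x1 x2 k2_def scale_simps mult.assoc)
  have y3: "x3 - scale k3 x1 = scale (q3 - k3 * q1) v"
    using p1 by (simp add: x1 x3 k3_def scale_simps mult.assoc)
  obtain d2 d3 where d: "d2 \<noteq> 0 \<or> d3 \<noteq> 0"
    "scale d2 (scale (q2 - k2 * q1) v) + scale d3 (scale (q3 - k3 * q1) v) = 0"
    using two_in_span1_dependent by blast
  have "scale (- (d2 * k2 + d3 * k3)) x1 = - scale (d2 * k2) x1 - scale (d3 * k3) x1"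
    by (simp only: scale_minus_left scale_left_distrib) (simp add: algebra_simps)
  then have "scale (- (d2 * k2 + d3 * k3)) x1 + scale d2 x2 + scale d3 x3
      = scale d2 (x2 - scale k2 x1) + scale d3 (x3 - scale k3 x1)"
    by (simp add: scale_right_diff_distrib algebra_simps)
  also have "\<dots> = 0" unfolding y2 y3 by (rule d(2))
  finally show ?thesis using d(1) by blast
qed

lemma three_in_span2_dependent:
  assumes "x1 = scale p1 u + scale q1 v" "x2 = scale p2 u + scale q2 v" "x3 = scale p3 u + scale q3 v"
  shows "\<exists>c1 c2 c3. (c1 \<noteq> 0 \<or> c2 \<noteq> 0 \<or> c3 \<noteq> 0) \<and> scale c1 x1 + scale c2 x2 + scale c3 x3 = 0"
proof -
  consider "p1 \<noteq> 0" | "p2 \<noteq> 0" | "p1 = 0" "p2 = 0" by blast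
  then show ?thesis
  proof cases
    case 1 then show ?thesis using three_in_span2_dependent_pivot[OF assms] by blast
  next
    case 2
    then obtain c2 c1 c3 where "c2 \<noteq> 0 \<or> c1 \<noteq> 0 \<or> c3 \<noteq> 0"
      "scale c2 x2 + scale c1 x1 + scale c3 x3 = 0"
      using three_in_span2_dependent_pivot[OF assms(2,1,3)] by blast
    then show ?thesis by (metis add.commute)
  next
    case 3
    obtain c1 c2 where "c1 \<noteq> 0 \<or> c2 \<noteq> 0" "scale c1 (scale q1 v) + scale c2 (scale q2 v) = 0"
      using two_in_span1_dependent by blast
    moreover have "x1 = scale q1 v" "x2 = scale q2 v" using 3 assms by simp_all
    ultimately have "(c1 \<noteq> 0 \<or> c2 \<noteq> 0 \<or> (0::'k) \<noteq> 0) \<and> scale c1 x1 + scale c2 x2 + scale 0 x3 = 0"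
      by simp
    then show ?thesis by blast
  qed
qed

lemma not_spanned_by_two:
  assumes "dim_gt_2 scale"
  shows "\<not> (\<forall>x. \<exists>p q. x = scale p u + scale q v)"
proof
  assume span: "\<forall>x. \<exists>p q. x = scale p u + scale q v"
  obtain u1 u2 u3 where ind: "\<forall>a b c. scale a u1 + scale b u2 + scale c u3 = 0 \<longrightarrow> a = 0 \<and> b = 0 \<and> c = 0"
    using assms unfolding dim_gt_2_def by blast
  obtain p1 q1 p2 q2 p3 q3 where "u1 = scale p1 u + scale q1 v" "u2 = scale p2 u + scale q2 v"
     "u3 = scale p3 u + scale q3 v" using span by metis
  from three_in_span2_dependent[OF this] ind show False by blast
qed

lemma third_in_span_of_independent:
  assumes L: "L = {scale a u + scale b v |a b. True}" and "x1 \<in> L" "x2 \<in> L" "x3 \<in> L"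
    and ind: "\<forall>c1 c2. scale c1 x1 + scale c2 x2 = 0 \<longrightarrow> c1 = 0 \<and> c2 = 0"
  obtains k1 k2 where "x3 = scale k1 x1 + scale k2 x2"
proof -
  obtain c1 c2 c3 where c: "c1 \<noteq> 0 \<or> c2 \<noteq> 0 \<or> c3 \<noteq> 0" "scale c1 x1 + scale c2 x2 + scale c3 x3 = 0"
    using three_in_span2_dependent assms(2-4) unfolding L by blast
  have c3: "c3 \<noteq> 0" using c ind by auto
  have "- (scale c1 x1 + scale c2 x2) = scale c3 x3"
    using c(2) by (simp only: neg_eq_iff_add_eq_0)
  then have "scale c3 x3 = - (scale c1 x1 + scale c2 x2)" by (rule sym)
  then have "x3 = scale (inverse c3) (- (scale c1 x1 + scale c2 x2))"
    using c3 by (metis scale_one scale_scale left_inverse)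
  then have "x3 = scale (- (inverse c3 * c1)) x1 + scale (- (inverse c3 * c2)) x2"
    by (simp add: scale_simps)
  then show ?thesis by (rule that)
qed

lemma adjacent_distant_transfer:
  assumes W: "subspace scale W" and E0: "subspace scale E0" and E1: "subspace scale E1"
    and adj: "adjacent scale W E0" and d01: "distant E0 E1" and WE1: "W \<inter> E1 = {0}"
  shows "distant W E1"
proof -
  obtain v0 where v0: "ssum W E0 = ssum W (span1 scale v0)"
    using adj unfolding adjacent_def quot_dim1_def by blast
  obtain c where c: "c \<notin> E0" "ssum E0 W = ssum E0 (span1 scale c)"
    using adj unfolding adjacent_def quot_dim1_def by blast
  have "c \<in> ssum E0 W" unfolding c(2) ssum_span1_iff using subspace_0[OF E0] by (metis add_0 scale_one)
  then obtain e w where ew: "e \<in> E0" "w \<in> W" "c = e + w" unfolding ssum_iff by blast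
  have "w \<in> ssum E0 E1" using d01 unfolding distant_def by blast
  then obtain w0 w1 where w01: "w0 \<in> E0" "w1 \<in> E1" "w = w0 + w1" unfolding ssum_iff by blast
  have "w0 \<notin> W"
  proof
    assume "w0 \<in> W"
    then have "w1 \<in> W" using subspace_diff[OF W ew(2)] w01 by (metis add_diff_cancel_left')
    moreover have "w1 \<noteq> 0" using ew c(1) w01 subspace_add[OF E0] by auto
    ultimately show False using WE1 w01 by blast
  qed
  \<comment> \<open>so \<open>w0\<close> can replace \<open>v0\<close> as the generator of \<open>W + E0\<close> modulo \<open>W\<close>\<close>
  moreover have "w0 \<in> ssum W (span1 scale v0)" unfolding v0[symmetric] using subset_ssum_right[OF W] w01 by blast
  moreover obtain w' r where wr: "w' \<in> W" "w0 = w' + scale r v0"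
    using calculation(2) unfolding ssum_span1_iff by blast
  ultimately have "r \<noteq> 0" by auto
  then have v0_eq: "v0 = scale (inverse r) (w0 - w')" using wr by simp
  have "x \<in> ssum W E1" for x
  proof -
    have "x \<in> ssum E0 E1" using d01 unfolding distant_def by blast
    then obtain x0 x1 where x01: "x0 \<in> E0" "x1 \<in> E1" "x = x0 + x1" unfolding ssum_iff by blast
    have "x0 \<in> ssum W (span1 scale v0)" unfolding v0[symmetric] using subset_ssum_right[OF W] x01 by blast
    then obtain w'' g where wg: "w'' \<in> W" "x0 = w'' + scale g v0" unfolding ssum_span1_iff by blast
    define k where "k = g * inverse r"
    have "x = (w'' + scale k w - scale k w') + (x1 - scale k w1)"
      using x01(3) wg(2) v0_eq w01(3) by (simp add: k_def scale_simps algebra_simps)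
    moreover have "w'' + scale k w - scale k w' \<in> W"
      using wg(1) ew(2) wr(1) by (intro subspace_diff[OF W] subspace_add[OF W] subspace_scale[OF W])
    moreover have "x1 - scale k w1 \<in> E1" using x01 w01 by (intro subspace_diff[OF E1] subspace_scale[OF E1])
    ultimately show ?thesis unfolding ssum_iff by blast
  qed
  then show ?thesis unfolding distant_def using WE1 by blast
qed

lemma disjoint_subspace_in_line_extension:
  assumes X: "subspace scale X" and Y: "subspace scale Y"
    and XY: "X \<inter> Y = {0}" and Yc: "Y \<subseteq> ssum X (span1 scale c)"
  obtains w where "Y \<subseteq> span1 scale w"
proof (cases "Y = {0}")
  case True
  then have "Y \<subseteq> span1 scale 0" using mem_span1_self by blast
  then show ?thesis by (rule that)
next
  case False
  then obtain w1 where w1: "w1 \<noteq> 0" "w1 \<in> Y" using subspace_0[OF Y] by blast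
  then have "w1 \<in> ssum X (span1 scale c)" using Yc by blast
  then obtain e0 b0 where eb: "e0 \<in> X" "w1 = e0 + scale b0 c" unfolding ssum_span1_iff by blast
  have b0: "b0 \<noteq> 0"
  proof
    assume "b0 = 0"
    then have "w1 \<in> X \<inter> Y" using eb w1 by simp
    then show False using XY w1 by blast
  qed
  have "w \<in> span1 scale w1" if w: "w \<in> Y" for w
  proof -
    have "w \<in> ssum X (span1 scale c)" using Yc w by blast
    then obtain e b where ebw: "e \<in> X" "w = e + scale b c" unfolding ssum_span1_iff by blast
    define k where "k = b * inverse b0"
    have "w - scale k w1 = e - scale k e0"
      using b0 by (simp add: ebw eb k_def scale_simps algebra_simps)
    moreover have "w - scale k w1 \<in> Y" using w w1 by (intro subspace_diff[OF Y] subspace_scale[OF Y])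
    moreover have "e - scale k e0 \<in> X" using ebw eb by (intro subspace_diff[OF X] subspace_scale[OF X])
    ultimately have "w - scale k w1 \<in> X \<inter> Y" by simp
    then have "w = scale k w1" using XY by simp
    then show ?thesis unfolding span1_def by blast
  qed
  then show ?thesis using that by blast
qed

text \<open>If \<open>V = W \<oplus> E0\<close>, adjacency makes both \<open>W \<cong> V/E0\<close> and \<open>V/W\<close> one-dimensional, so \<open>V\<close>
  would be spanned by two vectors.\<close>
lemma adjacent_not_distant:
  assumes dim: "dim_gt_2 scale" and W: "subspace scale W" and E0: "subspace scale E0"
    and adj: "adjacent scale W E0"
  shows "\<not> distant W E0"
proof
  assume dist: "distant W E0"
  obtain v where v: "ssum W E0 = ssum W (span1 scale v)"
    using adj unfolding adjacent_def quot_dim1_def by blast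
  obtain c where c: "ssum E0 W = ssum E0 (span1 scale c)"
    using adj unfolding adjacent_def quot_dim1_def by blast
  have "W \<subseteq> ssum E0 (span1 scale c)" using subset_ssum_right[OF E0] c by blast
  moreover have "E0 \<inter> W = {0}" using dist unfolding distant_def by blast
  ultimately obtain w0 where w0: "W \<subseteq> span1 scale w0"
    using disjoint_subspace_in_line_extension[OF E0 W] by blast
  have "\<exists>p q. x = scale p w0 + scale q v" for x
  proof -
    have "x \<in> ssum W (span1 scale v)" using dist v unfolding distant_def by blast
    then obtain w q where "w \<in> W" "x = w + scale q v" unfolding ssum_span1_iff by blast
    then show ?thesis using w0 unfolding span1_def by blast
  qed
  then show False using not_spanned_by_two[OF dim] by blast
qed

lemma image_cosets:
  assumes add: "\<And>x y. F (x + y) = F x + F y" and FG: "\<And>y. F (G y) = y"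
  shows "image F ` cosets X = cosets (F ` X)"
proof (intro equalityI subsetI)
  have translate: "F ` ((\<lambda>x. v + x) ` X) = (\<lambda>x. F v + x) ` (F ` X)" for v
    by (auto simp: image_image add)
  fix D assume "D \<in> image F ` cosets X"
  then obtain v where "D = F ` ((\<lambda>x. v + x) ` X)" unfolding cosets_def by blast
  then show "D \<in> cosets (F ` X)" unfolding cosets_def translate by blast
next
  fix C assume "C \<in> cosets (F ` X)"
  then obtain v where "C = (\<lambda>x. v + x) ` (F ` X)" unfolding cosets_def by blast
  then have "C = F ` ((\<lambda>x. G v + x) ` X)" by (auto simp: image_image add FG)
  then show "C \<in> image F ` cosets X" unfolding cosets_def by blast
qed

lemma image_qadd:
  assumes add: "\<And>x y. F (x + y) = F x + F y"
  shows "F ` qadd C D = qadd (F ` C) (F ` D)"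
  unfolding qadd_def image_def by (auto simp: add; force simp: add)

lemma image_qscale:
  assumes add: "\<And>x y. F (x + y) = F x + F y" and hom: "\<And>a x. F (scale a x) = scale a (F x)"
  shows "F ` qscale scale X a C = qscale scale (F ` X) a (F ` C)"
  unfolding qscale_def image_def by (auto simp: add hom; force simp: add hom)

lemma iso_quot_image:
  assumes iso: "iso_quot scale X"
    and add: "\<And>x y. F (x + y) = F x + F y" and hom: "\<And>a x. F (scale a x) = scale a (F x)"
    and GF: "\<And>x. G (F x) = x" and FG: "\<And>y. F (G y) = y"
  shows "iso_quot scale (F ` X)"
proof -
  obtain g where g: "bij_betw g X (cosets X)" "\<forall>x\<in>X. \<forall>y\<in>X. g (x + y) = qadd (g x) (g y)"
    "\<forall>a. \<forall>x\<in>X. g (scale a x) = qscale scale X a (g x)"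
    using iso unfolding iso_quot_def by blast
  have "bij_betw G (F ` X) X"
    by (rule bij_betw_byWitness[where f'=F]) (auto simp: GF FG)
  moreover have "bij_betw (image F) (cosets X) (cosets (F ` X))"
    unfolding bij_betw_def image_cosets[OF add FG, symmetric]
    by (metis GF inj_image_eq_iff inj_on_def)
  ultimately have "bij_betw (\<lambda>y. F ` g (G y)) (F ` X) (cosets (F ` X))"
    using bij_betw_trans[OF _ bij_betw_trans[OF g(1)]] by (simp add: comp_def)
  moreover have "\<forall>x\<in>F ` X. \<forall>y\<in>F ` X. F ` g (G (x + y)) = qadd (F ` g (G x)) (F ` g (G y))"
    using g(2) by (auto simp: add[symmetric] GF image_qadd[OF add])
  moreover have "\<forall>a. \<forall>x\<in>F ` X. F ` g (G (scale a x)) = qscale scale (F ` X) a (F ` g (G x))"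
    using g(3) by (auto simp: hom[symmetric] GF image_qscale[OF add hom])
  ultimately show ?thesis unfolding iso_quot_def by (intro exI[of _ "\<lambda>y. F ` g (G y)"]) blast
qed

lemma transvection_exists:
  assumes P: "hyperplane_compl UNIV P z" and d: "d \<in> P"
  obtains F G where "\<And>x y. F (x + y) = F x + F y" "\<And>a x. F (scale a x) = scale a (F x)"
    "\<And>x. G (F x) = x" "\<And>y. F (G y) = y"
    "\<And>p \<gamma>. p \<in> P \<Longrightarrow> F (p + scale \<gamma> z) = p + scale \<gamma> (z + d)"
proof -
  have sP: "subspace scale P" using P unfolding hyperplane_compl_def by blast
  define lam where "lam x = (THE \<alpha>. x - scale \<alpha> z \<in> P)" for x
  have lam_eq: "lam x = \<alpha>" if "x - scale \<alpha> z \<in> P" for x \<alpha>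
    unfolding lam_def using that hyperplane_compl_coord_unique[OF P] by blast
  have lam: "x - scale (lam x) z \<in> P" for x
    using P lam_eq unfolding hyperplane_compl_def by blast
  have lam_add: "lam (x + y) = lam x + lam y" for x y
  proof (rule lam_eq)
    have "(x + y) - scale (lam x + lam y) z = (x - scale (lam x) z) + (y - scale (lam y) z)"
      by (simp add: scale_left_distrib algebra_simps)
    then show "x + y - scale (lam x + lam y) z \<in> P" using subspace_add[OF sP lam lam] by (simp only:)
  qed
  have lam_hom: "lam (scale a x) = a * lam x" for a x
  proof (rule lam_eq)
    have "scale a x - scale (a * lam x) z = scale a (x - scale (lam x) z)"
      by (simp add: scale_right_diff_distrib)
    then show "scale a x - scale (a * lam x) z \<in> P" using subspace_scale[OF sP lam] by (simp only:)
  qed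
  have lam_d: "lam (x + scale c d) = lam x" for x c
  proof (rule lam_eq)
    have "(x + scale c d) - scale (lam x) z = (x - scale (lam x) z) + scale c d"
      by (simp add: algebra_simps)
    then show "(x + scale c d) - scale (lam x) z \<in> P"
      using subspace_add[OF sP lam subspace_scale[OF sP d]] by (simp only:)
  qed
  define F where "F x = x + scale (lam x) d" for x
  define G where "G x = x - scale (lam x) d" for x
  show ?thesis
  proof
    show "F (x + y) = F x + F y" for x y unfolding F_def lam_add by (simp add: scale_left_distrib algebra_simps)
    show "F (scale a x) = scale a (F x)" for a x unfolding F_def lam_hom by (simp add: scale_right_distrib)
    show "G (F x) = x" for x unfolding F_def G_def lam_d by simp
    show "F (G y) = y" for y
      using lam_d[of y "- lam y"] unfolding F_def G_def by (simp add: scale_minus_left)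
    show "F (p + scale \<gamma> z) = p + scale \<gamma> (z + d)" if "p \<in> P" for p \<gamma>
      using lam_eq[of "p + scale \<gamma> z" \<gamma>] that unfolding F_def by (simp add: scale_right_distrib add.assoc)
  qed
qed

lemma ssum_absorb:
  assumes X: "subspace scale X" and H: "subspace scale H" "H \<subseteq> X"
  shows "ssum X (ssum H Y) = ssum X Y"
proof (intro equalityI subsetI)
  fix x assume "x \<in> ssum X (ssum H Y)"
  then obtain e w where e: "e \<in> X" and w: "w \<in> ssum H Y" and x: "x = e + w"
    using ssum_iff[of x X "ssum H Y"] by blast
  obtain h y where h: "h \<in> H" and y: "y \<in> Y" and "w = h + y" using w ssum_iff[of w H Y] by blast
  then have "x = (e + h) + y" using x by (simp add: add.assoc)
  moreover have "e + h \<in> X" using subspace_add[OF X e] h H(2) by blast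
  ultimately show "x \<in> ssum X Y" using y unfolding ssum_iff by blast
next
  fix x assume "x \<in> ssum X Y"
  then obtain e y where "e \<in> X" "y \<in> ssum H Y" "x = e + y"
    using subset_ssum_right[OF H(1)] ssum_iff[of x X Y] by blast
  then show "x \<in> ssum X (ssum H Y)" using ssum_iff[of x X "ssum H Y"] by blast
qed

lemma ssum_hyperplane_compl:
  assumes H: "hyperplane_compl E0 H z" and E0: "subspace scale E0"
    and W: "subspace scale W" "H \<subseteq> W"
  shows "ssum W E0 = ssum W (span1 scale z)"
proof (intro equalityI subsetI)
  fix x assume "x \<in> ssum W E0"
  then obtain w e \<gamma> where w: "w \<in> W" and x: "x = w + e" and h: "e - scale \<gamma> z \<in> H"
    using H unfolding ssum_iff hyperplane_compl_def by blast
  have "x = (w + (e - scale \<gamma> z)) + scale \<gamma> z" using x by (simp add: algebra_simps)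
  moreover have "w + (e - scale \<gamma> z) \<in> W" using subspace_add[OF W(1) w] h W(2) by blast
  ultimately show "x \<in> ssum W (span1 scale z)" unfolding ssum_span1_iff by blast
next
  fix x assume "x \<in> ssum W (span1 scale z)"
  moreover have "span1 scale z \<subseteq> E0"
    using H span1_subset_iff[OF E0] unfolding hyperplane_compl_def by blast
  ultimately show "x \<in> ssum W E0" unfolding ssum_iff by blast
qed

lemma adjacent_exchange_complement:
  assumes H: "hyperplane_compl E0 H z" and E0: "subspace scale E0" and a: "a \<notin> E0"
  shows "adjacent scale (ssum H (span1 scale a)) E0"
proof -
  define W where "W = ssum H (span1 scale a)"
  have sH: "subspace scale H" "H \<subseteq> E0" "z \<in> E0" "z \<notin> H"
    using H unfolding hyperplane_compl_def by blast+
  have W: "subspace scale W" "H \<subseteq> W"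
    unfolding W_def using sH(1) subset_ssum_left[OF subspace_span1] by (auto intro: subspace_ssum subspace_span1)
  have "z \<notin> W"
  proof
    assume "z \<in> W"
    then obtain h \<beta> where hb: "h \<in> H" "z = h + scale \<beta> a" unfolding W_def ssum_span1_iff by blast
    then have "scale \<beta> a \<in> E0" using sH by (metis add_diff_cancel_left' subsetD subspace_diff[OF E0])
    then show False using scale_mem_subspace_iff[OF E0 a] hb sH by simp
  qed
  moreover have "ssum W E0 = ssum W (span1 scale z)" by (rule ssum_hyperplane_compl[OF H E0 W])
  moreover have "ssum E0 W = ssum E0 (span1 scale a)" unfolding W_def by (rule ssum_absorb[OF E0 sH(1,2)])
  ultimately show ?thesis unfolding adjacent_def quot_dim1_def W_def using a by blast
qed

text \<open>The transvection defined by such a \<open>P\<close> moves \<open>z\<close> to \<open>a\<close> and fixes \<open>H\<close>.\<close>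
lemma hyperplane_compl_through_difference:
  assumes H: "hyperplane_compl E0 H z" and E0: "subspace scale E0" and a: "a \<notin> E0"
  obtains P where "H \<subseteq> P" "a - z \<in> P" "hyperplane_compl UNIV P z"
proof -
  have sH: "subspace scale H" "H \<subseteq> E0" "z \<in> E0" "z \<notin> H"
    using H unfolding hyperplane_compl_def by blast+
  have "z \<notin> ssum H (span1 scale (a - z))"
  proof
    assume "z \<in> ssum H (span1 scale (a - z))"
    then obtain h \<beta> where hb: "h \<in> H" "z = h + scale \<beta> (a - z)" unfolding ssum_span1_iff by blast
    have "scale \<beta> a = z - h + scale \<beta> z" using hb by (simp add: scale_right_diff_distrib algebra_simps)
    moreover have "z - h + scale \<beta> z \<in> E0" using sH hb(1)
      by (blast intro: subspace_add[OF E0] subspace_diff[OF E0] subspace_scale[OF E0])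
    ultimately have "scale \<beta> a \<in> E0" by simp
    then have "\<beta> = 0" using scale_mem_subspace_iff[OF E0 a] by blast
    then show False using hb sH by simp
  qed
  then obtain P where "ssum H (span1 scale (a - z)) \<subseteq> P" "hyperplane_compl UNIV P z"
    using hyperplane_compl_exists subspace_ssum[OF sH(1) subspace_span1] by metis
  moreover have "H \<subseteq> ssum H (span1 scale (a - z))" "a - z \<in> ssum H (span1 scale (a - z))"
    using subset_ssum_left[OF subspace_span1] subset_ssum_right[OF sH(1)] mem_span1_self by blast+
  ultimately show ?thesis using that by blast
qed

lemma iso_quot_exchange_complement:
  assumes H: "hyperplane_compl E0 H z" and E0: "subspace scale E0" "iso_quot scale E0"
    and a: "a \<notin> E0"
  shows "iso_quot scale (ssum H (span1 scale a))"
proof -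
  have sH: "subspace scale H" "H \<subseteq> E0" "z \<in> E0" "\<forall>x\<in>E0. \<exists>\<gamma>. x - scale \<gamma> z \<in> H"
    using H unfolding hyperplane_compl_def by blast+
  obtain P where HP: "H \<subseteq> P" and dP: "a - z \<in> P" and P: "hyperplane_compl UNIV P z"
    using hyperplane_compl_through_difference[OF H E0(1) a] .
  obtain F G where FG: "\<And>x y. F (x + y) = F x + F y" "\<And>b x. F (scale b x) = scale b (F x)"
    "\<And>x. G (F x) = x" "\<And>y. F (G y) = y"
    and F_za: "\<And>p \<gamma>. p \<in> P \<Longrightarrow> F (p + scale \<gamma> z) = p + scale \<gamma> (z + (a - z))"
    using transvection_exists[OF P dP] by blast
  have F: "F (h + scale \<gamma> z) = h + scale \<gamma> a" if "h \<in> H" for h \<gamma>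
    using F_za HP that by auto
  have "F ` E0 = ssum H (span1 scale a)"
  proof (intro equalityI subsetI)
    fix y assume "y \<in> F ` E0"
    then obtain x \<gamma> where x: "x \<in> E0" "y = F x" and h: "x - scale \<gamma> z \<in> H" using sH(4) by blast
    have "y = F ((x - scale \<gamma> z) + scale \<gamma> z)" using x by simp
    also have "\<dots> = (x - scale \<gamma> z) + scale \<gamma> a" using F h by blast
    finally show "y \<in> ssum H (span1 scale a)" unfolding ssum_span1_iff using h by blast
  next
    fix y assume "y \<in> ssum H (span1 scale a)"
    then obtain h \<beta> where h: "h \<in> H" and y: "y = h + scale \<beta> a" unfolding ssum_span1_iff by blast
    have "h + scale \<beta> z \<in> E0"
      using subspace_add[OF E0(1) _ subspace_scale[OF E0(1) sH(3)]] h sH(2) by blast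
    moreover have "F (h + scale \<beta> z) = y" using F h y by blast
    ultimately show "y \<in> F ` E0" by blast
  qed
  then show ?thesis using iso_quot_image[OF E0(2) FG] by simp
qed

lemma exchange_complement_Int_eq_zero:
  assumes H: "hyperplane_compl E0 H z" and E0: "subspace scale E0" and E: "subspace scale E"
    and E0E: "E0 \<inter> E = {0}" and e: "e \<in> E"
  shows "ssum H (span1 scale (z + e)) \<inter> E = {0}"
proof -
  have sH: "subspace scale H" "H \<subseteq> E0" "z \<in> E0" "z \<notin> H"
    using H unfolding hyperplane_compl_def by blast+
  have "x = 0" if x: "x \<in> ssum H (span1 scale (z + e))" "x \<in> E" for x
  proof -
    obtain h \<beta> where h: "h \<in> H" and x_eq: "x = h + scale \<beta> (z + e)"
      using x(1) unfolding ssum_span1_iff by blast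
    have "h + scale \<beta> z = x - scale \<beta> e" using x_eq by (simp add: scale_right_distrib)
    moreover have "x - scale \<beta> e \<in> E" using x(2) e by (intro subspace_diff[OF E] subspace_scale[OF E])
    moreover have "h + scale \<beta> z \<in> E0"
      using subspace_add[OF E0 _ subspace_scale[OF E0 sH(3)]] h sH(2) by blast
    ultimately have hz: "h + scale \<beta> z = 0" using E0E by (metis IntI singletonD)
    have "\<beta> = 0"
    proof (rule ccontr)
      assume "\<beta> \<noteq> 0"
      have "scale \<beta> z = - h" using hz by (simp add: eq_neg_iff_add_eq_0 add.commute)
      then have "z = scale (inverse \<beta>) (- h)" using \<open>\<beta> \<noteq> 0\<close> by (metis scale_one scale_scale left_inverse)
      then show False using subspace_scale[OF sH(1) subspace_neg[OF sH(1) h]] sH(4) by simp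
    qed
    then show ?thesis using hz x_eq by simp
  qed
  then show ?thesis using subspace_0 sH(1) E subspace_ssum[OF sH(1) subspace_span1] by blast
qed

lemma Gr_subspace: "X \<in> Gr scale \<Longrightarrow> subspace scale X"
  unfolding Gr_def by blast

lemma exists_adjacent_containing:
  assumes E0: "E0 \<in> Gr scale" and E: "subspace scale E" and d0E: "distant E0 E"
    and a0: "a0 \<in> E0" and a1: "a1 \<notin> E0" and a1E: "\<forall>l. a1 - scale l a0 \<notin> E"
  obtains W where "W \<in> Gr scale" "adjacent scale W E0" "a0 \<in> W" "a1 \<in> W" "W \<inter> E = {0}"
proof -
  have sE0: "subspace scale E0" using E0 Gr_subspace by blast
  have "a1 \<in> ssum E0 E" using d0E unfolding distant_def by blast
  then obtain z e where z: "z \<in> E0" and e: "e \<in> E" and a1_eq: "a1 = z + e" unfolding ssum_iff by blast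
  have "z \<notin> span1 scale a0"
  proof
    assume "z \<in> span1 scale a0"
    then obtain l where "z = scale l a0" unfolding span1_def by blast
    then have "a1 - scale l a0 = e" using a1_eq by simp
    then show False using a1E e by metis
  qed
  then obtain P where "span1 scale a0 \<subseteq> P" and P: "hyperplane_compl UNIV P z"
    using hyperplane_compl_exists[OF subspace_span1] by blast
  define H where "H = P \<inter> E0"
  have H: "hyperplane_compl E0 H z" unfolding H_def using hyperplane_compl_Int[OF P sE0 z] .
  have sH: "subspace scale H" using H unfolding hyperplane_compl_def by blast
  have a0H: "a0 \<in> H" unfolding H_def using \<open>span1 scale a0 \<subseteq> P\<close> mem_span1_self a0 by blast
  define W where "W = ssum H (span1 scale a1)"
  have "W \<in> Gr scale"
    using subspace_ssum[OF sH subspace_span1] iso_quot_exchange_complement[OF H sE0 _ a1] E0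
    unfolding Gr_def W_def by blast
  moreover have "adjacent scale W E0" unfolding W_def by (rule adjacent_exchange_complement[OF H sE0 a1])
  moreover have "a0 \<in> W" "a1 \<in> W"
    unfolding W_def using subset_ssum_left[OF subspace_span1] subset_ssum_right[OF sH] a0H mem_span1_self
    by blast+
  moreover have "W \<inter> E = {0}"
    unfolding W_def a1_eq using exchange_complement_Int_eq_zero[OF H sE0 E _ e] d0E
    unfolding distant_def by blast
  ultimately show ?thesis using that by blast
qed

lemma quot_dim1_elim:
  assumes X: "subspace scale X" and XY: "quot_dim1 scale X Y"
    and b: "b \<in> Y" "b \<notin> X" and c: "c \<in> Y"
  obtains k where "c - scale k b \<in> X"
proof -
  obtain v where v: "ssum X Y = ssum X (span1 scale v)" using XY unfolding quot_dim1_def by blast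
  have "b \<in> ssum X (span1 scale v)" "c \<in> ssum X (span1 scale v)"
    unfolding v[symmetric] using subset_ssum_right[OF X] b c by blast+
  then obtain e \<beta> e' \<gamma> where e: "e \<in> X" "b = e + scale \<beta> v" and e': "e' \<in> X" "c = e' + scale \<gamma> v"
    unfolding ssum_span1_iff by blast
  have "\<beta> \<noteq> 0" using e b by auto
  then have "c - scale (\<gamma> * inverse \<beta>) b = e' - scale (\<gamma> * inverse \<beta>) e"
    by (simp add: e e' scale_simps algebra_simps)
  also have "\<dots> \<in> X" using e e' by (simp add: subspace_diff[OF X] subspace_scale[OF X])
  finally show ?thesis by (rule that)
qed

lemma exists_line_meeting_three:
  assumes W: "subspace scale W" and E0: "subspace scale E0" and E1: "subspace scale E1"
    and E2: "subspace scale E2" and adj: "quot_dim1 scale E0 W"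
    and E01: "E0 \<inter> E1 = {0}" and E12: "E1 \<inter> E2 = {0}"
    and b: "b \<noteq> 0" "b \<in> W" "b \<in> E1" and c: "c \<noteq> 0" "c \<in> W" "c \<in> E2"
  obtains L where "is_line scale L" "L \<subseteq> W" "meets scale L E0" "meets scale L E1" "meets scale L E2"
proof -
  have bE0: "b \<notin> E0" using b E01 by blast
  then obtain k where hE0: "c - scale k b \<in> E0" using quot_dim1_elim[OF E0 adj b(2) _ c(2)] by blast
  define h where "h = c - scale k b"
  have hW: "h \<in> W" unfolding h_def using b c by (intro subspace_diff[OF W] subspace_scale[OF W])
  have "h \<noteq> 0"
  proof
    assume "h = 0"
    then have "c \<in> E1 \<inter> E2" using subspace_scale[OF E1 b(3)] c unfolding h_def by simp
    then show False using c E12 by blast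
  qed
  define L where "L = {scale a h + scale a' b |a a'. True}"
  have "is_line scale L"
    unfolding is_line_def L_def
    using independent_of_mem_not_mem[OF E0 hE0[folded h_def] \<open>h \<noteq> 0\<close> bE0] by blast
  moreover have "L \<subseteq> W"
  proof
    fix x assume "x \<in> L"
    then obtain a a' where "x = scale a h + scale a' b" unfolding L_def by blast
    then show "x \<in> W" using subspace_add[OF W subspace_scale[OF W hW] subspace_scale[OF W b(2)]] by simp
  qed
  moreover have "h \<in> L" "b \<in> L" "c \<in> L"
  proof -
    have "h = scale 1 h + scale 0 b" "b = scale 0 h + scale 1 b" "c = scale 1 h + scale k b"
      unfolding h_def by simp_all
    then show "h \<in> L" "b \<in> L" "c \<in> L" unfolding L_def by blast+
  qed
  then have "meets scale L E0" "meets scale L E1" "meets scale L E2"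
    using meets_iff[OF subspace_line[of h b, folded L_def]] E0 E1 E2 hE0[folded h_def] \<open>h \<noteq> 0\<close> b c
    by blast+
  ultimately show ?thesis by (rule that)
qed

lemma R2_imp_D2:
  assumes dim: "dim_gt_2 scale" and SG: "S \<subseteq> Gr scale" and R1: "R1 S" and R2: "R2 scale S"
  shows "D2 scale S"
  unfolding D2_def
proof (intro ballI impI)
  fix E0 E1 E2 W E
  assume E012: "E0 \<in> S" "E1 \<in> S" "E2 \<in> S" and ne: "E0 \<noteq> E1 \<and> E0 \<noteq> E2 \<and> E1 \<noteq> E2"
    and WG: "W \<in> Gr scale" and hW: "adjacent scale W E0 \<and> \<not> distant W E1 \<and> \<not> distant W E2"
    and E: "E \<in> S"
  have sW: "subspace scale W" using WG Gr_subspace by blast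
  have sub: "subspace scale X" if "X \<in> S" for X using that SG Gr_subspace by blast
  have dist: "distant X Y" if "X \<in> S" "Y \<in> S" "X \<noteq> Y" for X Y
    using R1 that unfolding R1_def by blast
  have meets_W: "\<exists>x. x \<noteq> 0 \<and> x \<in> W \<and> x \<in> X" if X: "X \<in> S" "X \<noteq> E0" "\<not> distant W X" for X
  proof -
    have "W \<inter> X \<noteq> {0}"
      using adjacent_distant_transfer[OF sW sub[OF E012(1)] sub[OF X(1)]] hW dist[OF E012(1) X(1)] X
      by blast
    then show ?thesis using Int_eq_zero_iff[OF sW sub[OF X(1)]] by blast
  qed
  consider "E = E1 \<or> E = E2" | "E = E0" | "E \<noteq> E0" "E \<noteq> E1" "E \<noteq> E2" by blast
  then show "\<not> distant W E"
  proof cases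
    case 1 then show ?thesis using hW by blast
  next
    case 2 then show ?thesis using adjacent_not_distant[OF dim sW sub[OF E012(1)]] hW by simp
  next
    case 3
    obtain b where b: "b \<noteq> 0" "b \<in> W" "b \<in> E1" using meets_W[OF E012(2)] ne hW by blast
    obtain c where c: "c \<noteq> 0" "c \<in> W" "c \<in> E2" using meets_W[OF E012(3)] ne hW by blast
    have "E0 \<inter> E1 = {0}" "E1 \<inter> E2 = {0}"
      using dist[OF E012(1,2)] dist[OF E012(2,3)] ne unfolding distant_def by blast+
    then obtain L where L: "is_line scale L" "L \<subseteq> W"
      "meets scale L E0" "meets scale L E1" "meets scale L E2"
      using exists_line_meeting_three[OF sW sub[OF E012(1)] sub[OF E012(2)] sub[OF E012(3)] _ _ _ b c]
        hW unfolding adjacent_def by blast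
    then have "meets scale L E" using R2 E012 E ne unfolding R2_def by blast
    then obtain v where "v \<noteq> 0" "span1 scale v \<subseteq> L" "span1 scale v \<subseteq> E"
      unfolding meets_def is_point_def by blast
    then have "v \<in> W \<inter> E" "v \<noteq> 0" using L(2) mem_span1_self by blast+
    then show ?thesis unfolding distant_def by blast
  qed
qed

lemma D2_imp_R2:
  assumes SG: "S \<subseteq> Gr scale" and R1: "R1 S" and D2: "D2 scale S"
  shows "R2 scale S"
  unfolding R2_def
proof (intro allI impI ballI)
  fix L E0 E1 E2 E
  assume line: "is_line scale L" and E012: "E0 \<in> S" "E1 \<in> S" "E2 \<in> S" and E: "E \<in> S"
    and hL: "E0 \<noteq> E1 \<and> E0 \<noteq> E2 \<and> E1 \<noteq> E2 \<and> meets scale L E0 \<and> meets scale L E1 \<and> meets scale L E2"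
  obtain u v where L: "L = {scale a u + scale b v |a b. True}" using line unfolding is_line_def by blast
  have sL: "subspace scale L" unfolding L by (rule subspace_line)
  have sub: "subspace scale X" if "X \<in> S" for X using that SG Gr_subspace by blast
  have dist: "distant X Y" if "X \<in> S" "Y \<in> S" "X \<noteq> Y" for X Y
    using R1 that unfolding R1_def by blast
  show "meets scale L E"
  proof (rule ccontr)
    assume "\<not> meets scale L E"
    then have LE: "y \<in> L \<Longrightarrow> y \<in> E \<Longrightarrow> y = 0" for y using meets_iff[OF sL sub[OF E]] by blast
    have nE: "E \<noteq> E0" "E \<noteq> E1" "E \<noteq> E2" using \<open>\<not> meets scale L E\<close> hL by auto
    obtain a0 a1 a2 where a0: "a0 \<noteq> 0" "a0 \<in> L" "a0 \<in> E0" and a1: "a1 \<noteq> 0" "a1 \<in> L" "a1 \<in> E1"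
      and a2: "a2 \<noteq> 0" "a2 \<in> L" "a2 \<in> E2"
      using hL meets_iff[OF sL sub] E012 by meson
    have a1E0: "a1 \<notin> E0" using dist[of E0 E1] E012 hL a1 unfolding distant_def by auto
    have "a1 - scale l a0 \<notin> E" for l
    proof
      assume "a1 - scale l a0 \<in> E"
      then have "a1 - scale l a0 = 0" using LE subspace_diff[OF sL a1(2) subspace_scale[OF sL a0(2)]] by blast
      then have "a1 = scale l a0" by simp
      then show False using a1E0 subspace_scale[OF sub[OF E012(1)] a0(3)] by simp
    qed
    then obtain W where W: "W \<in> Gr scale" "adjacent scale W E0" "a0 \<in> W" "a1 \<in> W" "W \<inter> E = {0}"
      using exists_adjacent_containing SG E012 sub[OF E] dist[OF E012(1) E] nE a0(3) a1E0 by blast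
    have sW: "subspace scale W" using W(1) Gr_subspace by blast
    obtain k1 k2 where "a2 = scale k1 a0 + scale k2 a1"
      using third_in_span_of_independent[OF L a0(2) a1(2) a2(2)]
        independent_of_mem_not_mem[OF sub[OF E012(1)] a0(3) a0(1) a1E0] by blast
    then have "a2 \<in> W" using W(3,4) by (simp add: subspace_add[OF sW] subspace_scale[OF sW])
    then have "\<not> distant W E1" "\<not> distant W E2" using W(4) a1 a2 unfolding distant_def by blast+
    then have "\<not> distant W E" using D2 E012 hL W(1,2) E unfolding D2_def by blast
    moreover have "distant W E"
      using adjacent_distant_transfer[OF sW sub sub W(2) dist W(5)] E012(1) E nE by blast
    ultimately show False by blast
  qed
qed

end

theorem theorem4p10:
  fixes scale :: "'k::division_ring \<Rightarrow> 'v::ab_group_add \<Rightarrow> 'v"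
    and R :: "'v set set"
  assumes "left_vector_space scale"
    and "dim_gt_2 scale"
    and "Gr scale \<noteq> {}"
    and "R \<subseteq> Gr scale"
  shows "Z_regulus scale R \<longleftrightarrow> D1 R \<and> D2 scale R \<and> D3 scale R"
proof -
  interpret left_vs scale by unfold_locales (rule assms(1))
  have "R2 scale S \<longleftrightarrow> D2 scale S" if "S \<subseteq> Gr scale" "R1 S" for S
    using R2_imp_D2[OF assms(2) that] D2_imp_R2[OF that] by blast
  then show ?thesis unfolding Z_regulus_def D1_def D3_def using assms(4) by blast
qed

end
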